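(* Let $T$ be a strongly dependent complete theory. Let $I=(a_i:i\in[0,1])$ be an indiscernible segment, and let $\phi(x,y)$ be a formula with parameters from $\bar M$ such that $\mu_I(\phi(x,b))=0$ for all $b\in\bar M$. Then there is $k<\omega$ such that $\{\phi(a_i,y):i\in[0,1]\}$ is $k$-inconsistent (every subset of size $k$ is inconsistent).
   Context: Work in a monster model $\bar M$ of $T$. $T$ is strongly dependent if there do NOT exist $L$-formulas $\phi^\alpha(x,y^\alpha)$ ($\alpha<\omega$) and tuples $b^\alpha_i$ ($\alpha,i<\omega$) such that for every $\eta\in\omega^\omega$ the set $\{\phi^\alpha(x,b^\alpha_{\eta(\alpha)}):\alpha<\omega\}\cup\{\neg\phi^\alpha(x,b^\alpha_i):\alpha,i<\omega,\ i\neq\eta(\alpha)\}$ is consistent (this implies NIP). An indiscernible segment is a family $I=(a_i:i\in[0,1])$ indiscernible with respect to the usual order on $[0,1]$. Its global average measure $\mu_I$ is the Keisler measure over $\bar M$ assigning to a formula $\psi(x)$ over $\bar M$ the Lebesgue measure of $\{i\in[0,1]:\models\psi(a_i)\}$. *)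

theory Defs
  imports "HOL-Analysis.Analysis"
begin

text \<open>Symbols carry no fixed arity (equivalently: the
language has one symbol for each pair (symbol, arity)).\<close>

datatype 'f trm = Var nat | Fn 'f "'f trm list"

datatype ('f, 'r) fm =
    FEq "'f trm" "'f trm"
  | FRel 'r "'f trm list"
  | FNeg "('f, 'r) fm"
  | FConj "('f, 'r) fm" "('f, 'r) fm"
  | FEx nat "('f, 'r) fm"

record ('a, 'f, 'r) struct =
  carr :: "'a set"
  fint :: "'f \<Rightarrow> 'a list \<Rightarrow> 'a"
  rint :: "'r \<Rightarrow> 'a list \<Rightarrow> bool"

definition wf_struct :: "('a, 'f, 'r) struct \<Rightarrow> bool" where
  "wf_struct M \<longleftrightarrow> carr M \<noteq> {} \<and>
     (\<forall>f as. set as \<subseteq> carr M \<longrightarrow> fint M f as \<in> carr M)"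

fun fv_trm :: "'f trm \<Rightarrow> nat set" where
  "fv_trm (Var i) = {i}"
| "fv_trm (Fn f ts) = (\<Union>t\<in>set ts. fv_trm t)"

fun fv :: "('f, 'r) fm \<Rightarrow> nat set" where
  "fv (FEq s t) = fv_trm s \<union> fv_trm t"
| "fv (FRel r ts) = (\<Union>t\<in>set ts. fv_trm t)"
| "fv (FNeg p) = fv p"
| "fv (FConj p q) = fv p \<union> fv q"
| "fv (FEx i p) = fv p - {i}"

fun eval :: "('a, 'f, 'r) struct \<Rightarrow> (nat \<Rightarrow> 'a) \<Rightarrow> 'f trm \<Rightarrow> 'a" where
  "eval M s (Var i) = s i"
| "eval M s (Fn f ts) = fint M f (map (eval M s) ts)"

fun holds :: "('a, 'f, 'r) struct \<Rightarrow> (nat \<Rightarrow> 'a) \<Rightarrow> ('f, 'r) fm \<Rightarrow> bool" where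
  "holds M s (FEq t u) = (eval M s t = eval M s u)"
| "holds M s (FRel r ts) = rint M r (map (eval M s) ts)"
| "holds M s (FNeg p) = (\<not> holds M s p)"
| "holds M s (FConj p q) = (holds M s p \<and> holds M s q)"
| "holds M s (FEx i p) = (\<exists>a\<in>carr M. holds M (s(i := a)) p)"

text \<open>Assignment given by a tuple: variable j gets the j-th entry (unused variables
get an arbitrary element of the universe).  "sat M phi l" means that
phi(l_0, ..., l_{k-1}) holds in M.\<close>

definition asg :: "('a, 'f, 'r) struct \<Rightarrow> 'a list \<Rightarrow> nat \<Rightarrow> 'a" where
  "asg M l = (\<lambda>j. if j < length l then l ! j else (SOME a. a \<in> carr M))"

definition sat :: "('a, 'f, 'r) struct \<Rightarrow> ('f, 'r) fm \<Rightarrow> 'a list \<Rightarrow> bool" where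
  "sat M phi l \<longleftrightarrow> holds M (asg M l) phi"

definition tuple_in :: "('a, 'f, 'r) struct \<Rightarrow> nat \<Rightarrow> 'a list \<Rightarrow> bool" where
  "tuple_in M n l \<longleftrightarrow> length l = n \<and> set l \<subseteq> carr M"

text \<open>A partial type in an n-tuple of variables x with parameters is a set of pairs
(psi, c): psi has x as its variables 0..<n and the parameter places n..<n+|c|,
which are filled by the tuple c of elements of M.  Consistency (with the
elementary diagram of M) = finite satisfiability in M.\<close>

definition fin_sat :: "('a, 'f, 'r) struct \<Rightarrow> nat \<Rightarrow> (('f, 'r) fm \<times> 'a list) set \<Rightarrow> bool" where
  "fin_sat M n p \<longleftrightarrow> (\<forall>F. finite F \<and> F \<subseteq> p \<longrightarrow>
      (\<exists>a. tuple_in M n a \<and> (\<forall>(psi, c)\<in>F. sat M psi (a @ c))))"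

definition realized :: "('a, 'f, 'r) struct \<Rightarrow> nat \<Rightarrow> (('f, 'r) fm \<times> 'a list) set \<Rightarrow> bool" where
  "realized M n p \<longleftrightarrow> (\<exists>a. tuple_in M n a \<and> (\<forall>(psi, c)\<in>p. sat M psi (a @ c)))"

text \<open>|A| < |B| expressed as: there is no injection of B into A.\<close>
definition smaller :: "'b set \<Rightarrow> 'a set \<Rightarrow> bool" where
  "smaller A B \<longleftrightarrow> \<not> (\<exists>f. inj_on f B \<and> f ` B \<subseteq> A)"

definition saturated :: "('a, 'f, 'r) struct \<Rightarrow> bool" where
  "saturated M \<longleftrightarrow> (\<forall>n p. smaller (\<Union>(psi, c)\<in>p. set c) (carr M)
        \<and> (\<forall>(psi, c)\<in>p. set c \<subseteq> carr M) \<and> fin_sat M n p \<longrightarrow> realized M n p)"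

definition monster :: "('a, 'f, 'r) struct \<Rightarrow> bool" where
  "monster M \<longleftrightarrow> wf_struct M \<and> saturated M \<and>
     smaller (UNIV :: real set) (carr M) \<and> smaller (UNIV :: ('f, 'r) fm set) (carr M)"

text \<open>phi alpha (x, y^alpha) with |x| = n, |y^alpha| = m alpha, x = variables 0..<n,
y^alpha = variables n..<n + m alpha, no parameters.\<close>
definition strongly_dependent :: "('a, 'f, 'r) struct \<Rightarrow> bool" where
  "strongly_dependent M \<longleftrightarrow> \<not> (\<exists>(n::nat) (phi :: nat \<Rightarrow> ('f, 'r) fm) (m :: nat \<Rightarrow> nat)
       (b :: nat \<Rightarrow> nat \<Rightarrow> 'a list).
     (\<forall>\<alpha>. fv (phi \<alpha>) \<subseteq> {..<n + m \<alpha>}) \<and>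
     (\<forall>\<alpha> i. tuple_in M (m \<alpha>) (b \<alpha> i)) \<and>
     (\<forall>\<eta> :: nat \<Rightarrow> nat. fin_sat M n
        ({(phi \<alpha>, b \<alpha> (\<eta> \<alpha>)) | \<alpha>. True} \<union>
         {(FNeg (phi \<alpha>), b \<alpha> i) | \<alpha> i. i \<noteq> \<eta> \<alpha>})))"

definition indisc_segment :: "('a, 'f, 'r) struct \<Rightarrow> nat \<Rightarrow> (real \<Rightarrow> 'a list) \<Rightarrow> bool" where
  "indisc_segment M n I \<longleftrightarrow>
     (\<forall>i\<in>{0..1}. tuple_in M n (I i)) \<and>
     (\<forall>(psi :: ('f, 'r) fm) is js. fv psi \<subseteq> {..<length is * n} \<and>
        length is = length js \<and>
        sorted_wrt (<) is \<and> sorted_wrt (<) js \<and>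
        set is \<subseteq> {0..1} \<and> set js \<subseteq> {0..1} \<longrightarrow>
        (sat M psi (concat (map I is)) \<longleftrightarrow> sat M psi (concat (map I js))))"

definition avg_measure :: "('a, 'f, 'r) struct \<Rightarrow> (real \<Rightarrow> 'a list) \<Rightarrow> ('f, 'r) fm \<Rightarrow> 'a list \<Rightarrow> real" where
  "avg_measure M I psi c = measure lebesgue {i \<in> {0..1}. sat M psi (I i @ c)}"

end

theory Submission
  imports Defs
begin

text \<open>By strong dependence \<open>phi(x; y)\<close> cannot shatter the segment, so by indiscernibility there
  are \<open>K\<close> and a pattern \<open>S \<subseteq> K\<close> that no parameter realizes on any increasing \<open>K\<close>-tuple of
  points.  For fixed parameters the set \<open>A\<close> of points \<open>i\<close> with \<open>phi(a\<^sub>i, b)\<close> then cannot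
  alternate \<open>2K\<close> times, so it is a finite union of intervals and points, in particular
  measurable; being null it contains no interval.  If \<open>K + 1\<close> points lay in \<open>A\<close>, the gaps
  between consecutive ones would contain points outside \<open>A\<close>, and choosing from the points and
  the gaps would realize \<open>S\<close>.  Hence \<open>k = K + 1\<close> works.\<close>

section \<open>Renaming and quantifying variables\<close>

fun rename_trm :: "(nat \<Rightarrow> nat) \<Rightarrow> 'f trm \<Rightarrow> 'f trm" where
  "rename_trm \<sigma> (Var i) = Var (\<sigma> i)"
| "rename_trm \<sigma> (Fn f ts) = Fn f (map (rename_trm \<sigma>) ts)"

fun rename_fm :: "(nat \<Rightarrow> nat) \<Rightarrow> ('f, 'r) fm \<Rightarrow> ('f, 'r) fm" where
  "rename_fm \<sigma> (FEq s t) = FEq (rename_trm \<sigma> s) (rename_trm \<sigma> t)"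
| "rename_fm \<sigma> (FRel r ts) = FRel r (map (rename_trm \<sigma>) ts)"
| "rename_fm \<sigma> (FNeg p) = FNeg (rename_fm \<sigma> p)"
| "rename_fm \<sigma> (FConj p q) = FConj (rename_fm \<sigma> p) (rename_fm \<sigma> q)"
| "rename_fm \<sigma> (FEx i p) = FEx (\<sigma> i) (rename_fm \<sigma> p)"

lemma eval_rename_trm: "eval M s (rename_trm \<sigma> t) = eval M (s \<circ> \<sigma>) t"
  by (induction t) (auto cong: map_cong)

lemma fv_trm_rename_trm: "fv_trm (rename_trm \<sigma> t) = \<sigma> ` fv_trm t"
  by (induction t) auto

lemma fv_rename_fm: "fv (rename_fm \<sigma> p) \<subseteq> \<sigma> ` fv p"
  by (induction p) (auto simp: fv_trm_rename_trm)

lemma holds_rename_fm: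
  assumes "inj \<sigma>"
  shows "holds M s (rename_fm \<sigma> p) = holds M (s \<circ> \<sigma>) p"
proof (induction p arbitrary: s)
  case (FEx i p)
  have "\<And>a. s(\<sigma> i := a) \<circ> \<sigma> = (s \<circ> \<sigma>)(i := a)"
    using assms by (auto simp: fun_eq_iff inj_eq)
  then show ?case by (simp only: rename_fm.simps holds.simps FEx.IH)
qed (auto simp: eval_rename_trm o_def)

lemma eval_cong: "\<forall>v\<in>fv_trm t. s v = s' v \<Longrightarrow> eval M s t = eval M s' t"
  by (induction t) (auto cong: map_cong)

lemma holds_cong: "\<forall>v\<in>fv p. s v = s' v \<Longrightarrow> holds M s p = holds M s' p"
proof (induction p arbitrary: s s')
  case (FEq t u)
  then show ?case using eval_cong[of t s s' M] eval_cong[of u s s' M] by auto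
next
  case (FRel r ts)
  then have "map (eval M s) ts = map (eval M s') ts"
    using eval_cong[of _ s s' M] by (auto intro!: map_cong)
  then show ?case by (simp only: holds.simps)
next
  case (FEx i p)
  then have "\<And>a. holds M (s(i := a)) p = holds M (s'(i := a)) p" by auto
  then show ?case by simp
next
  case (FConj p q)
  then show ?case by (metis UnI1 UnI2 fv.simps(4) holds.simps(4))
qed simp

definition FTrue :: "('f, 'r) fm" where
  "FTrue = FNeg (FEx 0 (FNeg (FEq (Var 0) (Var 0))))"

lemma holds_FTrue [simp]: "holds M s FTrue"
  by (simp add: FTrue_def)

lemma fv_FTrue [simp]: "fv FTrue = {}"
  by (simp add: FTrue_def)

fun conj_list :: "('f, 'r) fm list \<Rightarrow> ('f, 'r) fm" where
  "conj_list [] = FTrue"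
| "conj_list (p # ps) = FConj p (conj_list ps)"

lemma holds_conj_list: "holds M s (conj_list ps) \<longleftrightarrow> (\<forall>p\<in>set ps. holds M s p)"
  by (induction ps) auto

lemma fv_conj_list: "fv (conj_list ps) = (\<Union>p\<in>set ps. fv p)"
  by (induction ps) auto

lemma holds_conj_list_map_upt:
  "holds M s (conj_list (map p [0..<K])) \<longleftrightarrow> (\<forall>t<K. holds M s (p t))"
  by (auto simp: holds_conj_list)

fun ex_list :: "nat list \<Rightarrow> ('f, 'r) fm \<Rightarrow> ('f, 'r) fm" where
  "ex_list [] p = p"
| "ex_list (v # vs) p = FEx v (ex_list vs p)"

lemma fv_ex_list: "fv (ex_list vs p) = fv p - set vs"
  by (induction vs) auto

definition shift_asg :: "nat \<Rightarrow> 'a list \<Rightarrow> (nat \<Rightarrow> 'a) \<Rightarrow> nat \<Rightarrow> 'a" where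
  "shift_asg a ws s v = (if a \<le> v \<and> v < a + length ws then ws ! (v - a) else s v)"

lemma shift_asg_Nil [simp]: "shift_asg a [] s = s"
  by (auto simp: shift_asg_def fun_eq_iff)

lemma shift_asg_Cons: "shift_asg a (x # ws) s = shift_asg (Suc a) ws (s(a := x))"
  by (auto simp: shift_asg_def fun_eq_iff nth_Cons' not_less_eq_eq)

lemma holds_ex_list_upt:
  "holds M s (ex_list [a..<a + r] p) \<longleftrightarrow>
     (\<exists>ws. length ws = r \<and> set ws \<subseteq> carr M \<and> holds M (shift_asg a ws s) p)"
proof (induction r arbitrary: a s)
  case (Suc r)
  have "[a..<a + Suc r] = a # [Suc a..<Suc a + r]"
    by (simp add: upt_rec)
  then have "holds M s (ex_list [a..<a + Suc r] p) \<longleftrightarrow>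
      (\<exists>x\<in>carr M. \<exists>ws. length ws = r \<and> set ws \<subseteq> carr M \<and> holds M (shift_asg a (x # ws) s) p)"
    by (simp only: ex_list.simps holds.simps Suc.IH shift_asg_Cons)
  also have "\<dots> \<longleftrightarrow> (\<exists>ws. length ws = Suc r \<and> set ws \<subseteq> carr M \<and> holds M (shift_asg a ws s) p)"
    by (metis (no_types, lifting) insert_subset length_Suc_conv list.simps(15))
  finally show ?case .
qed simp

section \<open>Patterns along an indiscernible segment\<close>

lemma nth_concat_map_blocks:
  assumes "\<forall>x\<in>set l. length (I x) = n" "t < length l" "v < n"
  shows "concat (map I l) ! (t * n + v) = I (l ! t) ! v"
  using assms
proof (induction l arbitrary: t)
  case (Cons x l)
  then show ?case by (cases t) (simp_all add: nth_append add.assoc)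
qed simp

lemma length_concat_map_blocks:
  "\<forall>x\<in>set l. length (I x) = n \<Longrightarrow> length (concat (map I l)) = length l * n"
  by (induction l) auto

lemma block_offset_less: "t < K \<Longrightarrow> v < n \<Longrightarrow> t * n + v < K * (n::nat)"
proof -
  assume "t < K" "v < n"
  then have "Suc t * n \<le> K * n" by (intro mult_le_mono1) simp
  then show ?thesis using \<open>v < n\<close> by simp
qed

text \<open>Sends the variables \<open>x y\<close> of \<open>phi(x, y)\<close>, \<open>|x| = n\<close> and \<open>|y| = m'\<close>, to \<open>x\<^sub>t y\<close> in
  \<open>x\<^sub>0 \<dots> x\<^sub>K\<^sub>-\<^sub>1 y\<close>; all other variables are moved out of the way only to keep it injective.\<close>

definition block_index :: "nat \<Rightarrow> nat \<Rightarrow> nat \<Rightarrow> nat \<Rightarrow> nat \<Rightarrow> nat" where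
  "block_index n m' K t v =
     (if v < n then t * n + v else if v < n + m' then K * n + (v - n) else v + (K * n + m'))"

lemma inj_block_index: "t < K \<Longrightarrow> inj (block_index n m' K t)"
proof (rule injI)
  fix x y assume "t < K" "block_index n m' K t x = block_index n m' K t y"
  then show "x = y"
    using block_offset_less[of t K x n] block_offset_less[of t K y n]
    by (auto simp: block_index_def split: if_splits)
qed

definition realizes_pattern :: "'a set \<Rightarrow> nat set \<Rightarrow> 'a list \<Rightarrow> bool" where
  "realizes_pattern A S l \<longleftrightarrow> (\<forall>t<length l. l ! t \<in> A \<longleftrightarrow> t \<in> S)"

definition pattern_realizable ::
    "('a, 'f, 'r) struct \<Rightarrow> nat \<Rightarrow> ('f, 'r) fm \<Rightarrow> ('b \<Rightarrow> 'a list) \<Rightarrow> nat set \<Rightarrow> 'b list \<Rightarrow> bool" where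
  "pattern_realizable M m' phi I S l \<longleftrightarrow>
     (\<exists>ws. tuple_in M m' ws \<and> realizes_pattern {i. sat M phi (I i @ ws)} S l)"

definition pattern_fm :: "('f, 'r) fm \<Rightarrow> nat \<Rightarrow> nat \<Rightarrow> nat \<Rightarrow> nat set \<Rightarrow> ('f, 'r) fm" where
  "pattern_fm phi n m' K S = ex_list [K * n..<K * n + m']
     (conj_list (map (\<lambda>t. if t \<in> S then rename_fm (block_index n m' K t) phi
                           else FNeg (rename_fm (block_index n m' K t) phi)) [0..<K]))"

lemma fv_pattern_fm:
  assumes "fv phi \<subseteq> {..<n + m'}"
  shows "fv (pattern_fm phi n m' K S) \<subseteq> {..<K * n}"
proof -
  have "block_index n m' K t ` fv phi \<subseteq> {..<K * n + m'}" if "t < K" for t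
    using assms block_offset_less[OF that, of _ n] by (fastforce simp: block_index_def)
  then show ?thesis
    using fv_rename_fm unfolding pattern_fm_def fv_ex_list fv_conj_list by fastforce
qed

lemma holds_block_instance:
  assumes "fv phi \<subseteq> {..<n + m'}" "\<forall>x\<in>set l. length (I x) = n"
    and "t < length l" "length ws = m'"
  shows "holds M (shift_asg (length l * n) ws (asg M (concat (map I l))))
           (rename_fm (block_index n m' (length l) t) phi) \<longleftrightarrow> sat M phi (I (l ! t) @ ws)"
  unfolding sat_def holds_rename_fm[OF inj_block_index[OF assms(3)]]
proof (rule holds_cong, intro ballI)
  fix v assume "v \<in> fv phi"
  then have v: "v < n + m'" using assms(1) by auto
  have len: "length (I (l ! t)) = n" using assms(2,3) by auto
  show "(shift_asg (length l * n) ws (asg M (concat (map I l))) \<circ> block_index n m' (length l) t) v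
      = asg M (I (l ! t) @ ws) v"
  proof (cases "v < n")
    case True
    then show ?thesis
      using block_offset_less[OF assms(3) True] length_concat_map_blocks[OF assms(2)]
        nth_concat_map_blocks[OF assms(2,3) True] len
      by (simp add: block_index_def shift_asg_def asg_def nth_append)
  next
    case False
    then show ?thesis
      using v len assms(4) by (auto simp: block_index_def shift_asg_def asg_def nth_append)
  qed
qed

lemma sat_pattern_fm:
  assumes "fv phi \<subseteq> {..<n + m'}" "\<forall>x\<in>set l. length (I x) = n"
  shows "sat M (pattern_fm phi n m' (length l) S) (concat (map I l)) \<longleftrightarrow>
         pattern_realizable M m' phi I S l"
proof -
  have "sat M (pattern_fm phi n m' (length l) S) (concat (map I l)) \<longleftrightarrow>
      (\<exists>ws. tuple_in M m' ws \<and> (\<forall>t<length l.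
         holds M (shift_asg (length l * n) ws (asg M (concat (map I l))))
           (rename_fm (block_index n m' (length l) t) phi) \<longleftrightarrow> t \<in> S))"
    unfolding sat_def pattern_fm_def holds_ex_list_upt holds_conj_list_map_upt tuple_in_def
    by (auto simp: conj_commute)
  also have "\<dots> \<longleftrightarrow> pattern_realizable M m' phi I S l"
    unfolding pattern_realizable_def realizes_pattern_def
    using holds_block_instance[OF assms] by (auto simp: tuple_in_def)
  finally show ?thesis .
qed

lemma indisc_segment_pattern_realizable_iff:
  assumes "indisc_segment M n I" "fv phi \<subseteq> {..<n + m'}" "length l = length l'"
    and "sorted_wrt (<) l" "sorted_wrt (<) l'" "set l \<subseteq> {0..1}" "set l' \<subseteq> {0..1}"
  shows "pattern_realizable M m' phi I S l \<longleftrightarrow> pattern_realizable M m' phi I S l'"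
proof -
  have lens: "\<forall>x\<in>set l. length (I x) = n" "\<forall>x\<in>set l'. length (I x) = n"
    using assms(1,6,7) by (auto simp: indisc_segment_def tuple_in_def)
  have "sat M (pattern_fm phi n m' (length l) S) (concat (map I l)) \<longleftrightarrow>
      sat M (pattern_fm phi n m' (length l) S) (concat (map I l'))"
    using assms(1) fv_pattern_fm[OF assms(2), of "length l" S] assms(3-7)
    unfolding indisc_segment_def
    by (elim conjE allE[of _ "pattern_fm phi n m' (length l) S"] allE[of _ l] allE[of _ l']) simp
  then show ?thesis
    using sat_pattern_fm[OF assms(2) lens(1)] sat_pattern_fm[OF assms(2) lens(2)] assms(3) by simp
qed

section \<open>Strong dependence forbids shattering\<close>

definition swap_blocks :: "nat \<Rightarrow> nat \<Rightarrow> nat \<Rightarrow> nat" where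
  "swap_blocks n m' v = (if v < n then v + m' else if v < n + m' then v - n else v)"

lemma inj_swap_blocks: "inj (swap_blocks n m')"
  by (rule injI) (auto simp: swap_blocks_def split: if_splits)

lemma fv_rename_swap_blocks:
  "fv phi \<subseteq> {..<n + m'} \<Longrightarrow> fv (rename_fm (swap_blocks n m') phi) \<subseteq> {..<m' + n}"
  using fv_rename_fm[of "swap_blocks n m'" phi] by (force simp: swap_blocks_def)

lemma sat_rename_swap_blocks:
  assumes "fv phi \<subseteq> {..<n + m'}" "length a = n" "length ws = m'"
  shows "sat M (rename_fm (swap_blocks n m') phi) (ws @ a) \<longleftrightarrow> sat M phi (a @ ws)"
  unfolding sat_def holds_rename_fm[OF inj_swap_blocks]
  by (rule holds_cong) (use assms in \<open>auto simp: swap_blocks_def asg_def nth_append\<close>)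

definition unit_point :: "nat \<times> nat \<Rightarrow> real" where
  "unit_point p = 1 / (1 + real (prod_encode p))"

lemma unit_point_in_unit_interval: "unit_point p \<in> {0..1}"
  by (simp add: unit_point_def)

lemma inj_unit_point: "inj unit_point"
  by (rule injI) (simp add: unit_point_def prod_encode_eq)

text \<open>A shattered segment violates strong dependence with all \<open>phi\<^sup>\<alpha>\<close> equal to \<open>phi\<close> (with its
  variable blocks swapped) and \<open>b\<^sup>\<alpha>\<^sub>i\<close> the member of the segment at the point coded by \<open>(\<alpha>, i)\<close>.\<close>

lemma shatters_imp_not_strongly_dependent:
  fixes M :: "('a, 'f, 'r) struct" and I :: "real \<Rightarrow> 'a list"
  assumes fvphi: "fv phi \<subseteq> {..<n + m'}"
    and tuples: "\<forall>i\<in>{0..1}. tuple_in M n (I i)"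
    and shatters: "\<And>P S. finite P \<Longrightarrow> P \<subseteq> {0..1} \<Longrightarrow>
       \<exists>ws. tuple_in M m' ws \<and> (\<forall>i\<in>P. sat M phi (I i @ ws) \<longleftrightarrow> i \<in> S)"
  shows "\<not> strongly_dependent M"
proof -
  define psi where "psi = rename_fm (swap_blocks n m') phi"
  define b where "b = (\<lambda>\<alpha> i. I (unit_point (\<alpha>, i)))"
  have tuples_b: "tuple_in M n (b \<alpha> i)" for \<alpha> i
    using tuples unit_point_in_unit_interval by (simp add: b_def)
  have "fin_sat M m' ({(psi, b \<alpha> (\<eta> \<alpha>)) | \<alpha>. True} \<union> {(FNeg psi, b \<alpha> i) | \<alpha> i. i \<noteq> \<eta> \<alpha>})"
    for \<eta> :: "nat \<Rightarrow> nat"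
  proof -
    define g where "g = (\<lambda>(\<alpha>, i). (if i = \<eta> \<alpha> then psi else FNeg psi, b \<alpha> i))"
    have type_eq: "{(psi, b \<alpha> (\<eta> \<alpha>)) | \<alpha>. True} \<union> {(FNeg psi, b \<alpha> i) | \<alpha> i. i \<noteq> \<eta> \<alpha>} = range g"
      unfolding g_def by (auto simp: image_def)
    have "\<exists>ws. tuple_in M m' ws \<and> (\<forall>(ps, d)\<in>g ` C. sat M ps (ws @ d))" if fin: "finite C" for C
    proof -
      obtain ws where ws: "tuple_in M m' ws"
        and pattern: "\<forall>x\<in>unit_point ` C. sat M phi (I x @ ws) \<longleftrightarrow> x \<in> unit_point ` {(\<alpha>, i) \<in> C. i = \<eta> \<alpha>}"
        using shatters[of "unit_point ` C" "unit_point ` {(\<alpha>, i) \<in> C. i = \<eta> \<alpha>}"] fin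
          unit_point_in_unit_interval by blast
      have "sat M (fst (g (\<alpha>, i))) (ws @ b \<alpha> i)" if "(\<alpha>, i) \<in> C" for \<alpha> i
      proof -
        have "sat M phi (b \<alpha> i @ ws) \<longleftrightarrow> i = \<eta> \<alpha>"
          using pattern that inj_eq[OF inj_unit_point] by (auto simp: b_def)
        moreover have "sat M psi (ws @ b \<alpha> i) \<longleftrightarrow> sat M phi (b \<alpha> i @ ws)"
          using sat_rename_swap_blocks[OF fvphi, of "b \<alpha> i" ws M] tuples_b[of \<alpha> i] ws
          by (simp add: psi_def tuple_in_def)
        ultimately show ?thesis by (cases "i = \<eta> \<alpha>") (simp_all add: g_def sat_def)
      qed
      then show ?thesis
        using ws by (auto simp: g_def)
    qed
    then show ?thesis
      unfolding fin_sat_def type_eq by (metis finite_subset_image)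
  qed
  moreover have "fv psi \<subseteq> {..<m' + n}"
    using fv_rename_swap_blocks[OF fvphi] by (simp add: psi_def)
  ultimately show ?thesis
    unfolding strongly_dependent_def not_not using tuples_b
    by (intro exI[of _ m'] exI[of _ "\<lambda>_. psi"] exI[of _ "\<lambda>_. n"] exI[of _ b]) simp
qed

section \<open>Null sets of reals omitting a pattern\<close>

fun alternates :: "'a set \<Rightarrow> bool \<Rightarrow> 'a list \<Rightarrow> bool" where
  "alternates A v [] \<longleftrightarrow> True"
| "alternates A v (x # xs) \<longleftrightarrow> (x \<in> A \<longleftrightarrow> v) \<and> alternates A (\<not> v) xs"

lemma alternates_nth:
  "alternates A v xs \<Longrightarrow> j < length xs \<Longrightarrow> xs ! j \<in> A \<longleftrightarrow> (if even j then v else \<not> v)"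
proof (induction xs arbitrary: v j)
  case (Cons x xs)
  then show ?case by (cases j) auto
qed simp

definition has_alternation :: "'a::linorder set \<Rightarrow> bool \<Rightarrow> 'a set \<Rightarrow> nat \<Rightarrow> bool" where
  "has_alternation A v D L \<longleftrightarrow>
     (\<exists>xs. length xs = L \<and> sorted_wrt (<) xs \<and> set xs \<subseteq> D \<and> alternates A v xs)"

lemma no_alternation_above_Inf:
  fixes A D :: "real set" and v :: bool
  defines "B \<equiv> {x \<in> D. x \<in> A \<longleftrightarrow> v}"
  assumes "bdd_below D" "B \<noteq> {}" "\<not> has_alternation A v D (Suc L)"
  shows "\<not> has_alternation A (\<not> v) (D \<inter> {Inf B<..}) L"
proof
  assume "has_alternation A (\<not> v) (D \<inter> {Inf B<..}) L"
  then obtain ys where ys: "length ys = L" "sorted_wrt (<) ys" "set ys \<subseteq> D \<inter> {Inf B<..}"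
      "alternates A (\<not> v) ys"
    unfolding has_alternation_def by blast
  have "bdd_below B" using assms(2) unfolding B_def by (rule bdd_below_mono) auto
  obtain b where b: "b \<in> B" "\<forall>y\<in>set ys. b < y"
  proof (cases ys)
    case Nil
    from assms(3) obtain b where "b \<in> B" by blast
    then show ?thesis using that Nil by simp
  next
    case (Cons y ys')
    then have "Inf B < y" using ys(3) by auto
    then obtain b where "b \<in> B" "b < y"
      using cInf_less_iff[OF assms(3) \<open>bdd_below B\<close>, of y] by blast
    moreover have "\<forall>z\<in>set ys'. y < z" using ys(2) Cons by simp
    ultimately show ?thesis using that[of b] Cons by (auto dest: less_trans[OF \<open>b < y\<close>])
  qed
  have "length (b # ys) = Suc L" "sorted_wrt (<) (b # ys)" "set (b # ys) \<subseteq> D"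
    "alternates A v (b # ys)"
    using ys b unfolding B_def by auto
  then show False using assms(4) unfolding has_alternation_def by blast
qed

text \<open>Induction on \<open>L\<close>: below the first point of \<open>D\<close> where membership in \<open>A\<close> is \<open>v\<close>,
  \<open>A \<inter> D\<close> is trivial, and above it one alternation has been used up.\<close>

lemma lebesgue_measurable_if_no_alternation:
  fixes A D :: "real set"
  assumes "bdd_below D" "D \<in> sets lebesgue" "\<not> has_alternation A v D L"
  shows "A \<inter> D \<in> sets lebesgue"
  using assms
proof (induction L arbitrary: D v)
  case 0
  then show ?case by (simp add: has_alternation_def)
next
  case (Suc L)
  define B where "B = {x \<in> D. x \<in> A \<longleftrightarrow> v}"
  show ?case
  proof (cases "B = {}")
    case True
    then have "A \<inter> D = (if v then {} else D)" unfolding B_def by auto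
    then show ?thesis using Suc.prems by simp
  next
    case False
    define D' where "D' = D \<inter> {Inf B<..}"
    have "bdd_below D'"
      using Suc.prems(1) unfolding D'_def by (rule bdd_below_mono) auto
    moreover have "D' \<in> sets lebesgue"
      using Suc.prems(2) unfolding D'_def by (intro sets.Int) auto
    moreover have "\<not> has_alternation A (\<not> v) D' L"
      using no_alternation_above_Inf[of D A v] Suc.prems(1,3) False by (simp add: B_def D'_def)
    ultimately have above: "A \<inter> D' \<in> sets lebesgue" by (rule Suc.IH)
    have "bdd_below B"
      using Suc.prems(1) unfolding B_def by (rule bdd_below_mono) auto
    then have "x \<notin> B" if "x < Inf B" for x
      using cInf_lower[of x B] that by auto
    then have "A \<inter> (D \<inter> {..<Inf B}) = (if v then {} else D \<inter> {..<Inf B})"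
      unfolding B_def by auto
    moreover have "D \<inter> {..<Inf B} \<in> sets lebesgue"
      using Suc.prems(2) by (intro sets.Int) auto
    ultimately have below: "A \<inter> (D \<inter> {..<Inf B}) \<in> sets lebesgue" by simp
    have at: "A \<inter> (D \<inter> {Inf B}) \<in> sets lebesgue"
      by (rule sets.countable) auto
    have "A \<inter> D = (A \<inter> D') \<union> (A \<inter> (D \<inter> {..<Inf B})) \<union> (A \<inter> (D \<inter> {Inf B}))"
      unfolding D'_def by auto
    then show ?thesis using above below at by simp
  qed
qed

lemma interleaved_less:
  fixes p q :: "nat \<Rightarrow> 'a::linorder"
  assumes "\<And>t. t < K \<Longrightarrow> p t < q t" "\<And>t. Suc t < K \<Longrightarrow> q t < p (Suc t)"
  shows "i < j \<Longrightarrow> j < K \<Longrightarrow> q i < p j"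
proof (induction j)
  case (Suc j)
  show ?case
  proof (cases "i = j")
    case False
    then have "q i < p j" using Suc by auto
    also have "p j < q j" using assms(1) Suc.prems by auto
    also have "q j < p (Suc j)" using assms(2) Suc.prems by auto
    finally show ?thesis .
  qed (use assms(2) Suc.prems in auto)
qed simp

lemma interleaved_realizes_pattern:
  fixes p q :: "nat \<Rightarrow> 'a::linorder"
  assumes "\<And>t. t < K \<Longrightarrow> p t < q t" "\<And>t. Suc t < K \<Longrightarrow> q t < p (Suc t)"
    and "\<And>t. t < K \<Longrightarrow> p t \<in> A" "\<And>t. t < K \<Longrightarrow> q t \<notin> A"
  obtains l where "length l = K" "sorted_wrt (<) l" "set l \<subseteq> p ` {..<K} \<union> q ` {..<K}"
    "realizes_pattern A S l"
proof
  define r where "r t = (if t \<in> S then p t else q t)" for t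
  show "length (map r [0..<K]) = K" by simp
  have "r i < r j" if "i < j" "j < K" for i j
  proof -
    have "r i \<le> q i" using assms(1) that by (auto simp: r_def less_imp_le)
    also have "q i < p j" using interleaved_less[of K p q i j] assms(1,2) that by blast
    also have "p j \<le> r j" using assms(1) that by (auto simp: r_def less_imp_le)
    finally show ?thesis .
  qed
  then show "sorted_wrt (<) (map r [0..<K])"
    by (auto simp: sorted_wrt_iff_nth_less)
  show "set (map r [0..<K]) \<subseteq> p ` {..<K} \<union> q ` {..<K}"
    by (auto simp: r_def)
  show "realizes_pattern A S (map r [0..<K])"
    using assms(3,4) by (auto simp: realizes_pattern_def r_def)
qed

lemma lebesgue_measurable_if_omits_pattern:
  fixes A :: "real set"
  assumes "A \<subseteq> {0..1}"
    and omits: "\<And>l. length l = K \<Longrightarrow> sorted_wrt (<) l \<Longrightarrow> set l \<subseteq> {0..1} \<Longrightarrow>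
       \<not> realizes_pattern A S l"
  shows "A \<in> sets lebesgue"
proof -
  have "\<not> has_alternation A True {0..1} (2 * K)"
  proof
    assume "has_alternation A True {0..1} (2 * K)"
    then obtain xs where xs: "length xs = 2 * K" "sorted_wrt (<) xs" "set xs \<subseteq> {0..1}"
        "alternates A True xs"
      unfolding has_alternation_def by blast
    have mem: "xs ! (2 * t) \<in> {0..1}" "xs ! (2 * t + 1) \<in> {0..1}" if "t < K" for t
    proof -
      have "2 * t < length xs" "2 * t + 1 < length xs" using that xs(1) by auto
      then show "xs ! (2 * t) \<in> {0..1}" "xs ! (2 * t + 1) \<in> {0..1}"
        using xs(3) by (meson nth_mem subsetD)+
    qed
    have less: "xs ! (2 * t) < xs ! (2 * t + 1)" if "t < K" for t
      using xs(1,2) that by (simp add: sorted_wrt_nth_less)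
    have less': "xs ! (2 * t + 1) < xs ! (2 * Suc t)" if "Suc t < K" for t
      using xs(1,2) that by (simp add: sorted_wrt_nth_less)
    have in_A: "xs ! (2 * t) \<in> A" if "t < K" for t
      using alternates_nth[OF xs(4), of "2 * t"] that xs(1) by simp
    have not_in_A: "xs ! (2 * t + 1) \<notin> A" if "t < K" for t
      using alternates_nth[OF xs(4), of "2 * t + 1"] that xs(1) by simp
    obtain l where l: "length l = K" "sorted_wrt (<) l"
        "set l \<subseteq> (\<lambda>t. xs ! (2 * t)) ` {..<K} \<union> (\<lambda>t. xs ! (2 * t + 1)) ` {..<K}"
        "realizes_pattern A S l"
      using interleaved_realizes_pattern[of K "\<lambda>t. xs ! (2 * t)" "\<lambda>t. xs ! (2 * t + 1)",
          OF less less' in_A not_in_A] by blast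
    moreover have "set l \<subseteq> {0..1}"
      using l(3) mem by auto
    ultimately show False using omits by blast
  qed
  then have "A \<inter> {0..1} \<in> sets lebesgue"
    by (rule lebesgue_measurable_if_no_alternation[rotated 2]) auto
  then show ?thesis using assms(1) by (simp add: Int_absorb2)
qed

lemma exists_not_in_null_set_between:
  fixes A :: "real set"
  assumes "A \<in> fmeasurable lebesgue" "measure lebesgue A = 0" "u < w"
  obtains q where "u < q" "q < w" "q \<notin> A"
proof -
  have "\<not> {u<..<w} \<subseteq> A"
  proof
    assume "{u<..<w} \<subseteq> A"
    then have "measure lebesgue {u<..<w} \<le> measure lebesgue A"
      using assms(1) by (intro measure_mono_fmeasurable) auto
    then show False using assms(2,3) by simp
  qed
  then obtain q where "q \<in> {u<..<w}" "q \<notin> A" by blast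
  then show ?thesis by (intro that) auto
qed

text \<open>Measurability of \<open>A\<close> must be derived (from the omitted pattern): for a non-measurable
  set \<open>measure lebesgue A = 0\<close> holds by default and carries no information.\<close>

lemma card_le_if_null_omits_pattern:
  fixes A :: "real set"
  assumes "A \<subseteq> {0..1}" "measure lebesgue A = 0"
    and omits: "\<And>l. length l = K \<Longrightarrow> sorted_wrt (<) l \<Longrightarrow> set l \<subseteq> {0..1} \<Longrightarrow>
       \<not> realizes_pattern A S l"
    and "finite P" "P \<subseteq> A"
  shows "card P \<le> K"
proof (rule ccontr)
  assume "\<not> card P \<le> K"
  then have "Suc K \<le> card P" by simp
  then obtain P' where P': "P' \<subseteq> P" "card P' = Suc K" "finite P'"
    by (rule obtain_subset_with_card_n)
  define p where "p = sorted_list_of_set P'"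
  have p: "length p = Suc K" "sorted_wrt (<) p" "set p \<subseteq> A"
    using P' assms(5) by (auto simp: p_def)
  have p_in: "p ! t \<in> A" if "t < Suc K" for t
    using p(1,3) that nth_mem by fastforce
  have p_less: "p ! t < p ! Suc t" if "t < K" for t
    using p(1,2) that by (simp add: sorted_wrt_nth_less)
  have "A \<in> fmeasurable lebesgue"
    using lebesgue_measurable_if_omits_pattern[OF assms(1) omits] assms(1)
    by (intro bounded_set_imp_lmeasurable) (auto intro: bounded_subset[of "{0..1}"])
  then have "\<exists>q. p ! t < q \<and> q < p ! Suc t \<and> q \<notin> A" if "t < K" for t
    using exists_not_in_null_set_between[OF _ assms(2) p_less[OF that]] by metis
  then obtain q where q: "\<And>t. t < K \<Longrightarrow> p ! t < q t \<and> q t < p ! Suc t \<and> q t \<notin> A"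
    by metis
  have q_in: "q t \<in> {0..1}" if "t < K" for t
    using q[OF that] p_in[of t] p_in[of "Suc t"] that assms(1) by fastforce
  have interleaved: "p ! t < q t" "q t \<notin> A" "p ! t \<in> A" if "t < K" for t
    using q[OF that] p_in[of t] that by auto
  have interleaved': "q t < p ! Suc t" if "Suc t < K" for t
    using q[of t] that by simp
  obtain l where l: "length l = K" "sorted_wrt (<) l"
      "set l \<subseteq> (\<lambda>t. p ! t) ` {..<K} \<union> q ` {..<K}" "realizes_pattern A S l"
    by (rule interleaved_realizes_pattern[of K "\<lambda>t. p ! t" q A S,
          OF interleaved(1) interleaved' interleaved(3,2)])
  have "(\<lambda>t. p ! t) ` {..<K} \<subseteq> {0..1}" "q ` {..<K} \<subseteq> {0..1}"
    using p_in q_in assms(1) by auto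
  then have "set l \<subseteq> {0..1}"
    using l(3) by blast
  then show False using omits l(1,2,4) by blast
qed


lemma realizes_pattern_restrict:
  "set l \<subseteq> D \<Longrightarrow> realizes_pattern {x \<in> D. P x} S l \<longleftrightarrow> realizes_pattern {x. P x} S l"
  unfolding realizes_pattern_def by (auto dest: nth_mem)

lemma indisc_segment_omits_pattern:
  assumes "strongly_dependent M" "indisc_segment M n I" "fv phi \<subseteq> {..<n + m'}"
  obtains K S where "\<And>l. length l = K \<Longrightarrow> sorted_wrt (<) l \<Longrightarrow> set l \<subseteq> {0..1} \<Longrightarrow>
    \<not> pattern_realizable M m' phi I S l"
proof -
  have "\<forall>i\<in>{0..1}. tuple_in M n (I i)"
    using assms(2) by (simp add: indisc_segment_def)
  then have "\<not> (\<forall>P S. finite P \<longrightarrow> P \<subseteq> {0..1} \<longrightarrow>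
      (\<exists>ws. tuple_in M m' ws \<and> (\<forall>i\<in>P. sat M phi (I i @ ws) \<longleftrightarrow> i \<in> S)))"
    using shatters_imp_not_strongly_dependent[OF assms(3)] assms(1) by metis
  then obtain P S where P: "finite P" "P \<subseteq> {0..1}"
    and not_shattered: "\<not> (\<exists>ws. tuple_in M m' ws \<and> (\<forall>i\<in>P. sat M phi (I i @ ws) \<longleftrightarrow> i \<in> S))"
    by blast
  define l0 where "l0 = sorted_list_of_set P"
  have l0: "sorted_wrt (<) l0" "set l0 = P"
    using P(1) by (simp_all add: l0_def)
  have not_realizable: "\<not> pattern_realizable M m' phi I {t. l0 ! t \<in> S} l0"
  proof
    assume "pattern_realizable M m' phi I {t. l0 ! t \<in> S} l0"
    then obtain ws where ws: "tuple_in M m' ws"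
      "\<forall>t<length l0. sat M phi (I (l0 ! t) @ ws) \<longleftrightarrow> l0 ! t \<in> S"
      by (auto simp: pattern_realizable_def realizes_pattern_def)
    then have "\<forall>i\<in>P. sat M phi (I i @ ws) \<longleftrightarrow> i \<in> S"
      using l0(2) by (auto simp: in_set_conv_nth)
    then show False using not_shattered ws(1) by blast
  qed
  show thesis
  proof (rule that[of "length l0" "{t. l0 ! t \<in> S}"])
    fix l :: "real list"
    assume l: "length l = length l0" "sorted_wrt (<) l" "set l \<subseteq> {0..1}"
    then show "\<not> pattern_realizable M m' phi I {t. l0 ! t \<in> S} l"
      using not_realizable P(2) l0
        indisc_segment_pattern_realizable_iff[OF assms(2,3) l(1,2) l0(1) l(3)] by simp
  qed
qed

lemma card_le_if_avg_measure_zero: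
  assumes omits: "\<And>l. length l = K \<Longrightarrow> sorted_wrt (<) l \<Longrightarrow> set l \<subseteq> {0..1} \<Longrightarrow>
      \<not> pattern_realizable M m' phi I S l"
    and "tuple_in M m' ws" "avg_measure M I phi ws = 0"
    and "finite P" "P \<subseteq> {0..1}" "\<forall>i\<in>P. sat M phi (I i @ ws)"
  shows "card P \<le> K"
proof (rule card_le_if_null_omits_pattern)
  show "{i \<in> {0..1}. sat M phi (I i @ ws)} \<subseteq> {0..1}" by blast
  show "measure lebesgue {i \<in> {0..1}. sat M phi (I i @ ws)} = 0"
    using assms(3) by (simp add: avg_measure_def)
  show "finite P" "P \<subseteq> {i \<in> {0..1}. sat M phi (I i @ ws)}"
    using assms(4-6) by auto
  show "\<not> realizes_pattern {i \<in> {0..1}. sat M phi (I i @ ws)} S l"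
    if "length l = K" "sorted_wrt (<) l" "set l \<subseteq> {0..1}" for l
    using omits[OF that] assms(2) realizes_pattern_restrict[OF that(3)]
    unfolding pattern_realizable_def by blast
qed

theorem lemma3p4:
  fixes M :: "('a, 'f, 'r) struct"
    and n m :: nat
    and I :: "real \<Rightarrow> 'a list"
    and phi :: "('f, 'r) fm"
    and c :: "'a list"
  assumes "monster M"
    and "strongly_dependent M"
    and "indisc_segment M n I"
    and "fv phi \<subseteq> {..<n + m + length c}"
    and "set c \<subseteq> carr M"
    and "\<forall>b. tuple_in M m b \<longrightarrow> avg_measure M I phi (b @ c) = 0"
  shows "\<exists>k::nat. \<forall>S. S \<subseteq> {0..1} \<and> finite S \<and> card S = k \<longrightarrow>
           \<not> (\<exists>b. tuple_in M m b \<and> (\<forall>i\<in>S. sat M phi (I i @ b @ c)))"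
proof -
  have "fv phi \<subseteq> {..<n + (m + length c)}" using assms(4) by (simp add: add.assoc)
  then obtain K S where omits: "\<And>l. length l = K \<Longrightarrow> sorted_wrt (<) l \<Longrightarrow> set l \<subseteq> {0..1} \<Longrightarrow>
      \<not> pattern_realizable M (m + length c) phi I S l"
    using indisc_segment_omits_pattern[OF assms(2,3)] by blast
  show ?thesis
  proof (intro exI[of _ "Suc K"] allI impI notI)
    fix P assume P: "P \<subseteq> {0..1} \<and> finite P \<and> card P = Suc K"
      and "\<exists>b. tuple_in M m b \<and> (\<forall>i\<in>P. sat M phi (I i @ b @ c))"
    then obtain b where b: "tuple_in M m b" "\<forall>i\<in>P. sat M phi (I i @ b @ c)" by blast
    have "tuple_in M (m + length c) (b @ c)"
      using b(1) assms(5) by (simp add: tuple_in_def)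
    moreover have "avg_measure M I phi (b @ c) = 0"
      using assms(6) b(1) by blast
    ultimately have "card P \<le> K"
      using card_le_if_avg_measure_zero[OF omits _ _ _ _ b(2)] P by blast
    with P show False by simp
  qed
qed

end
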